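(* Let $\alpha=(\alpha_\pi)_{\pi\in\mathcal P}$ be monic, singleton inductive weights. Let $A=\bigsqcup_{\mathsf Q\in\mathcal F}A^{\mathsf Q}$ be a multi-faced algebra in which each face $A^{\mathsf Q}$ is unital with unit $1^{\mathsf Q}$, and let $\varphi:A\to\mathbb C$ be linear with $\varphi(1^{\mathsf Q})=1$ for all $\mathsf Q$ and $\varphi$ vanishing on the two-sided ideal generated by $\{1^{\mathsf q}-1^{\mathsf Q}:\mathsf q,\mathsf Q\in\mathcal F\}$. Then $\log_\alpha\hat\varphi(a_1\otimes\cdots\otimes a_n)=0$ whenever $n>1$, $a_\ell\in A^{\mathbf f(\ell)}$ for some $\mathbf f\in\mathcal F^n$, and $a_s=1^{\mathbf f(s)}$ for some $s\in[n]$.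
   Context: Fix a finite set $\mathcal F$ of faces. Algebras are complex associative, not necessarily unital. A multi-faced algebra $A=\bigsqcup_{\mathsf Q}A^{\mathsf Q}$ is an algebra with subalgebras $A^{\mathsf Q}$ such that the canonical homomorphism from their free product to $A$ is an isomorphism. For $\mathbf f\in\mathcal F^n$, $\mathcal P(\mathbf f)$ is the set of set partitions of $[n]$ whose elements $\ell$ carry face $\mathbf f(\ell)$, $\mathcal P=\bigcup_{\mathbf f}\mathcal P(\mathbf f)$; partitions of a subset of $[n]$ (with restricted faces) are identified with elements of $\mathcal P$ via the order-preserving bijection. Weights $\alpha=(\alpha_\pi)_{\pi\in\mathcal P}\subset\mathbb C$ are monic if $\alpha_\pi=1$ for every one-block partition, and singleton inductive if $\alpha_\pi=\alpha_{\pi\setminus\{s\}}$ whenever $\{s\}$ is a singleton block of $\pi$ (where $\pi\setminus\{s\}$ is the partition of $[n]\setminus\{s\}$ obtained by removing that block). Let $V=\bigoplus_{\mathsf Q}A^{\mathsf Q}$ (a vector space graded by faces) and $T_0(V)=\bigoplus_{m\ge1}V^{\otimes m}$ the non-unital tensor algebra; $\mu:T_0(V)\to A$ is the canonical homomorphism and $\hat\varphi=\varphi\circ\mu$. For a linear $\psi$ on $T_0(V)$ define $\exp_\alpha(\psi)(x_1\otimes\cdots\otimes x_m)=\sum_{\pi\in\mathcal P(\mathbf g)}\alpha_\pi\prod_{\beta\in\pi}\psi(x_\beta)$ for $x_i\in V^{\mathbf g(i)}$, where $x_\beta$ is the tensor product of the $x_i$, $i\in\beta$, in increasing order; $\exp_\alpha$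 is a bijection on linear functionals on $T_0(V)$ and $\log_\alpha$ denotes its inverse. *)

theory Defs
  imports Complex_Main "HOL-Library.Disjoint_Sets"
begin

(* The algebra A is the whole type 'a; it is a (not necessarily unital) ring
   (Isabelle class ring = associative, non-unital) together with a complex
   scalar multiplication sm making it a complex associative algebra. *)
definition complex_algebra :: "(complex \<Rightarrow> 'a::ring \<Rightarrow> 'a) \<Rightarrow> bool" where
  "complex_algebra sm \<longleftrightarrow>
     (\<forall>c x y. sm c (x + y) = sm c x + sm c y) \<and>
     (\<forall>c d x. sm (c + d) x = sm c x + sm d x) \<and>
     (\<forall>c d x. sm c (sm d x) = sm (c * d) x) \<and>
     (\<forall>x. sm 1 x = x) \<and>
     (\<forall>c x y. sm c (x * y) = sm c x * y) \<and>
     (\<forall>c x y. sm c (x * y) = x * sm c y)"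

definition subalgebra :: "(complex \<Rightarrow> 'a::ring \<Rightarrow> 'a) \<Rightarrow> 'a set \<Rightarrow> bool" where
  "subalgebra sm B \<longleftrightarrow> 0 \<in> B \<and>
     (\<forall>x\<in>B. \<forall>y\<in>B. x + y \<in> B \<and> x * y \<in> B) \<and>
     (\<forall>c. \<forall>x\<in>B. sm c x \<in> B)"

definition is_ideal :: "(complex \<Rightarrow> 'a::ring \<Rightarrow> 'a) \<Rightarrow> 'a set \<Rightarrow> bool" where
  "is_ideal sm I \<longleftrightarrow> 0 \<in> I \<and>
     (\<forall>x\<in>I. \<forall>y\<in>I. x + y \<in> I) \<and>
     (\<forall>c. \<forall>x\<in>I. sm c x \<in> I) \<and>
     (\<forall>x\<in>I. \<forall>a. a * x \<in> I \<and> x * a \<in> I)"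

definition ideal_generated :: "(complex \<Rightarrow> 'a::ring \<Rightarrow> 'a) \<Rightarrow> 'a set \<Rightarrow> 'a set" where
  "ideal_generated sm G = \<Inter>{I. is_ideal sm I \<and> G \<subseteq> I}"

definition linear_functional :: "(complex \<Rightarrow> 'a::ring \<Rightarrow> 'a) \<Rightarrow> ('a \<Rightarrow> complex) \<Rightarrow> bool" where
  "linear_functional sm \<phi> \<longleftrightarrow>
     (\<forall>x y. \<phi> (x + y) = \<phi> x + \<phi> y) \<and> (\<forall>c x. \<phi> (sm c x) = c * \<phi> x)"

fun lprod :: "'a::ring list \<Rightarrow> 'a" where
  "lprod [] = 0"
| "lprod [x] = x"
| "lprod (x # y # xs) = x * lprod (y # xs)"

(* A simple tensor x_1 \<otimes> ... \<otimes> x_m in T_0(V), V = \<Oplus>_Q A^Q, with x_i \<in> V^{g(i)},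
   is represented by the list [(g(1),x_1),...,(g(m),x_m)] with x_i \<in> A^{g(i)}, m \<ge> 1. *)
definition admissible :: "('f \<Rightarrow> 'a set) \<Rightarrow> ('f \<times> 'a) list \<Rightarrow> bool" where
  "admissible S w \<longleftrightarrow> w \<noteq> [] \<and> (\<forall>p\<in>set w. snd p \<in> S (fst p))"

definition alternating :: "('f \<Rightarrow> 'a set) \<Rightarrow> ('f \<times> 'a) list \<Rightarrow> bool" where
  "alternating S w \<longleftrightarrow> admissible S w \<and>
     (\<forall>i. Suc i < length w \<longrightarrow> fst (w ! i) \<noteq> fst (w ! Suc i))"

(* A linear functional on T_0(V) is represented by its values on simple tensors:
   a family of functionals multilinear in each slot (for each face sequence),
   set to 0 on non-admissible lists. *)
definition T0_functional :: "(complex \<Rightarrow> 'a::ring \<Rightarrow> 'a) \<Rightarrow> ('f \<Rightarrow> 'a set)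
     \<Rightarrow> (('f \<times> 'a) list \<Rightarrow> complex) \<Rightarrow> bool" where
  "T0_functional sm S \<psi> \<longleftrightarrow>
     (\<forall>w. \<not> admissible S w \<longrightarrow> \<psi> w = 0) \<and>
     (\<forall>u v q a b c. a \<in> S q \<longrightarrow> b \<in> S q \<longrightarrow>
        \<psi> (u @ (q, sm c a + b) # v) = c * \<psi> (u @ (q, a) # v) + \<psi> (u @ (q, b) # v))"

(* Free product condition: the canonical homomorphism from the free product
   \<Oplus>_{alternating Q_1..Q_m} A^{Q_1} \<otimes> ... \<otimes> A^{Q_m} to A (given by multiplication)
   is (i) surjective and (ii) injective; (ii) is expressed dually: every linear
   functional on the free product factors through A. *)
definition free_product :: "(complex \<Rightarrow> 'a::ring \<Rightarrow> 'a) \<Rightarrow> ('f \<Rightarrow> 'a set) \<Rightarrow> bool" where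
  "free_product sm S \<longleftrightarrow>
     (\<forall>x. \<exists>ws. (\<forall>w\<in>set ws. alternating S w) \<and> x = sum_list (map (\<lambda>w. lprod (map snd w)) ws)) \<and>
     (\<forall>\<psi>. T0_functional sm S \<psi> \<longrightarrow>
        (\<exists>\<phi>. linear_functional sm \<phi> \<and>
             (\<forall>w. alternating S w \<longrightarrow> \<phi> (lprod (map snd w)) = \<psi> w)))"

definition multi_faced :: "(complex \<Rightarrow> 'a::ring \<Rightarrow> 'a) \<Rightarrow> ('f \<Rightarrow> 'a set) \<Rightarrow> bool" where
  "multi_faced sm S \<longleftrightarrow> complex_algebra sm \<and> (\<forall>Q. subalgebra sm (S Q)) \<and> free_product sm S"

(* Weights: alpha f \<pi> for a face list f (length n) and a set partition \<pi> of {0..<n}. *)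
definition monic_weights :: "('f list \<Rightarrow> nat set set \<Rightarrow> complex) \<Rightarrow> bool" where
  "monic_weights \<alpha> \<longleftrightarrow> (\<forall>f. f \<noteq> [] \<longrightarrow> \<alpha> f {{0..<length f}} = 1)"

(* order-preserving bijection from a finite set T \<subseteq> nat onto {0..<card T} *)
definition std_idx :: "nat set \<Rightarrow> nat \<Rightarrow> nat" where
  "std_idx T x = card {y\<in>T. y < x}"

definition singleton_inductive :: "('f list \<Rightarrow> nat set set \<Rightarrow> complex) \<Rightarrow> bool" where
  "singleton_inductive \<alpha> \<longleftrightarrow>
     (\<forall>f \<pi> s. partition_on {0..<length f} \<pi> \<longrightarrow> {s} \<in> \<pi> \<longrightarrow> length f > 1 \<longrightarrow>
        \<alpha> f \<pi> = \<alpha> (nths f ({0..<length f} - {s}))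
                   ((\<lambda>B. std_idx ({0..<length f} - {s}) ` B) ` (\<pi> - {{s}})))"

definition exp_alpha :: "('f \<Rightarrow> 'a set) \<Rightarrow> ('f list \<Rightarrow> nat set set \<Rightarrow> complex)
     \<Rightarrow> (('f \<times> 'a) list \<Rightarrow> complex) \<Rightarrow> ('f \<times> 'a) list \<Rightarrow> complex" where
  "exp_alpha S \<alpha> \<psi> w = (if admissible S w then
     (\<Sum>\<pi>\<in>{\<pi>. partition_on {0..<length w} \<pi>}. \<alpha> (map fst w) \<pi> * (\<Prod>B\<in>\<pi>. \<psi> (nths w B)))
     else 0)"

definition log_alpha :: "(complex \<Rightarrow> 'a::ring \<Rightarrow> 'a) \<Rightarrow> ('f \<Rightarrow> 'a set) \<Rightarrow> ('f list \<Rightarrow> nat set set \<Rightarrow> complex)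
     \<Rightarrow> (('f \<times> 'a) list \<Rightarrow> complex) \<Rightarrow> ('f \<times> 'a) list \<Rightarrow> complex" where
  "log_alpha sm S \<alpha> \<psi> = (THE \<chi>. T0_functional sm S \<chi> \<and> exp_alpha S \<alpha> \<chi> = \<psi>)"

definition phi_hat :: "('f \<Rightarrow> 'a set) \<Rightarrow> ('a::ring \<Rightarrow> complex) \<Rightarrow> ('f \<times> 'a) list \<Rightarrow> complex" where
  "phi_hat S \<phi> w = (if admissible S w then \<phi> (lprod (map snd w)) else 0)"

end

(*
  The alpha-logarithm chi = log_alpha psi of a functional psi vanishing off admissible words
  obeys the recursion chi(w) = psi(w) - sum of alpha_pi * prod_{B in pi} chi(w_B) over all
  partitions pi of the positions except the one-block partition (the weights are monic).
  The recursion preserves multilinearity, so it does compute log_alpha.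

  Since phi kills the differences of the units, a unit letter can be deleted from a word of
  length at least 2 without changing phi_hat: it is absorbed by the unit of a neighbouring
  letter. Now let w contain a unit at position s and expand phi_hat(w) = exp_alpha chi (w).
  By singleton inductivity the partitions having {s} as a block contribute
  chi(unit) * exp_alpha chi (w without s) = phi_hat(w without s) = phi_hat(w). In every other
  partition but the one-block one, s lies in a shorter block with at least two letters, whose
  cumulant vanishes by induction on the length. What remains is chi(w) = 0.
*)
theory Submission
  imports Defs
begin

section \<open>Products of words\<close>

lemma lprod_Cons: "xs \<noteq> [] \<Longrightarrow> lprod (x # xs) = x * lprod xs"
  by (cases xs) auto

lemma lprod_append: "xs \<noteq> [] \<Longrightarrow> ys \<noteq> [] \<Longrightarrow> lprod (xs @ ys) = lprod xs * lprod ys"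
  by (induction xs rule: lprod.induct) (auto simp: lprod_Cons mult.assoc)

lemma lprod_mid_add: "lprod (xs @ (x + y) # ys) = lprod (xs @ x # ys) + lprod (xs @ y # ys)"
  by (induction xs) (cases ys; auto simp: lprod_Cons distrib_left distrib_right)+

lemma lprod_mid_diff: "lprod (xs @ (x - y) # ys) = lprod (xs @ x # ys) - lprod (xs @ y # ys)"
  using lprod_mid_add[of xs "x - y" y ys] by simp

lemma lprod_mid_scale:
  assumes "complex_algebra sm"
  shows "lprod (xs @ sm c x # ys) = sm c (lprod (xs @ x # ys))"
  using assms unfolding complex_algebra_def
  by (induction xs) (cases ys; auto simp: lprod_Cons)+

lemma lprod_mid_mem_ideal:
  assumes "is_ideal sm I" "x \<in> I"
  shows "lprod (xs @ x # ys) \<in> I"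
  using assms unfolding is_ideal_def
  by (induction xs) (cases ys; auto simp: lprod_Cons)+

lemma lprod_mid_mem_ideal_generated:
  "x \<in> G \<Longrightarrow> lprod (xs @ x # ys) \<in> ideal_generated sm G"
  unfolding ideal_generated_def using lprod_mid_mem_ideal by blast

lemma lprod_mid_left_unit:
  "ys \<noteq> [] \<Longrightarrow> e * hd ys = hd ys \<Longrightarrow> lprod (xs @ e # ys) = lprod (xs @ ys)"
proof (induction xs)
  case Nil
  then show ?case by (cases ys rule: lprod.cases) (auto simp: mult.assoc[symmetric])
qed (simp add: lprod_Cons)

lemma lprod_right_unit: "xs \<noteq> [] \<Longrightarrow> last xs * e = last xs \<Longrightarrow> lprod xs * e = lprod xs"
  by (induction xs rule: lprod.induct) (auto simp: mult.assoc)

section \<open>Subwords\<close>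

lemma length_nths_subset:
  assumes "B \<subseteq> {0..<length xs}"
  shows "length (nths xs B) = card B"
proof -
  have "{i. i < length xs \<and> i \<in> B} = B" using assms by auto
  then show ?thesis by (simp add: length_nths)
qed

lemma nths_mid_mem:
  "length u \<in> B \<Longrightarrow> nths (u @ x # v) B = nths u B @ x # nths v {j. Suc (j + length u) \<in> B}"
  by (simp add: nths_append nths_Cons)

lemma nths_mid_not_mem: "length u \<notin> B \<Longrightarrow> nths (u @ x # v) B = nths (u @ y # v) B"
  by (simp add: nths_append nths_Cons)

lemma nths_singleton_index: "s < length xs \<Longrightarrow> nths xs {s} = [xs ! s]"
proof (induction xs arbitrary: s)
  case (Cons x xs)
  then show ?case by (cases s) (auto simp: nths_Cons)
qed simp

lemma nths_remove_mid: "nths (u @ x # v) ({0..<length (u @ x # v)} - {length u}) = u @ v"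
proof -
  have "nths u ({0..<length (u @ x # v)} - {length u}) = u" by (rule nths_all) auto
  moreover have "nths v {j. Suc j + length u \<in> {0..<length (u @ x # v)} - {length u}} = v"
    by (rule nths_all) auto
  ultimately show ?thesis by (simp add: nths_append nths_Cons)
qed

lemma strict_mono_on_std_idx: "finite T \<Longrightarrow> strict_mono_on T (std_idx T)"
  unfolding strict_mono_on_def std_idx_def by (auto intro!: psubset_card_mono)

lemma inj_on_std_idx: "finite T \<Longrightarrow> inj_on (std_idx T) T"
  by (rule strict_mono_on_imp_inj_on[OF strict_mono_on_std_idx])

lemma bij_betw_std_idx:
  assumes "finite T"
  shows "bij_betw (std_idx T) T {0..<card T}"
proof -
  have "std_idx T x < card T" if "x \<in> T" for x
    unfolding std_idx_def using assms that by (intro psubset_card_mono) auto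
  then have "std_idx T ` T \<subseteq> {0..<card T}" by auto
  moreover have "card (std_idx T ` T) = card T"
    by (rule card_image[OF inj_on_std_idx[OF assms]])
  ultimately have "std_idx T ` T = {0..<card T}" by (intro card_subset_eq) auto
  then show ?thesis using inj_on_std_idx[OF assms] by (simp add: bij_betw_def)
qed

lemma nths_nths_std_idx:
  assumes "finite T" "B \<subseteq> T"
  shows "nths (nths xs T) (std_idx T ` B) = nths xs B"
proof -
  have "{i \<in> T. std_idx T i \<in> std_idx T ` B} = B"
    using inj_on_image_mem_iff[OF inj_on_std_idx[OF assms(1)]] assms(2) by auto
  then show ?thesis by (simp add: nths_nths std_idx_def)
qed

lemma admissible_mid_cong:
  "x \<in> S q \<Longrightarrow> y \<in> S q \<Longrightarrow> admissible S (u @ (q, x) # v) = admissible S (u @ (q, y) # v)"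
  by (auto simp: admissible_def)

lemma admissible_nths: "admissible S w \<Longrightarrow> nths w B \<noteq> [] \<Longrightarrow> admissible S (nths w B)"
  using set_nths_subset[of w B] by (auto simp: admissible_def)

section \<open>Set partitions\<close>

lemma partition_on_block_subset: "partition_on A P \<Longrightarrow> B \<in> P \<Longrightarrow> B \<subseteq> A"
  by (auto dest: partition_onD1)

lemma partition_on_block_unique:
  "partition_on A P \<Longrightarrow> B \<in> P \<Longrightarrow> C \<in> P \<Longrightarrow> x \<in> B \<Longrightarrow> x \<in> C \<Longrightarrow> B = C"
  by (auto simp: partition_on_def dest: disjointD)

lemma partition_on_block_exists: "partition_on A P \<Longrightarrow> x \<in> A \<Longrightarrow> \<exists>B\<in>P. x \<in> B"
  by (auto dest: partition_onD1)

lemma partition_on_eq_singleton_if_mem: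
  assumes P: "partition_on A P" and "A \<in> P"
  shows "P = {A}"
proof -
  have "B = A" if B: "B \<in> P" for B
  proof -
    obtain x where "x \<in> B" using B partition_onD3[OF P] by (metis ex_in_conv)
    then show ?thesis
      using partition_on_block_unique[OF P B \<open>A \<in> P\<close>] partition_on_block_subset[OF P B] by blast
  qed
  with \<open>A \<in> P\<close> show ?thesis by blast
qed

lemma partition_on_Diff_singleton_block:
  assumes P: "partition_on A P" and s: "{s} \<in> P"
  shows "partition_on (A - {s}) (P - {{s}})"
proof -
  have "disjnt {s} (\<Union>(P - {{s}}))"
    using partition_on_block_unique[OF P s] by (auto simp: disjnt_def)
  moreover have "insert {s} (P - {{s}}) = P" using s by auto
  ultimately show ?thesis using partition_on_insert[of "{s}" "P - {{s}}" A] P by simp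
qed

lemma partition_on_bij_betw_image:
  assumes h: "bij_betw h A B" and P: "partition_on A P"
  shows "partition_on B ((`) h ` P)"
proof -
  have "(`) h ` P - {{}} = (`) h ` P" using partition_onD3[OF P] by auto
  then show ?thesis using partition_on_inj_image[OF P, of h] h by (auto simp: bij_betw_def)
qed

lemma bij_betw_remove_singleton_block:
  assumes "s \<in> A"
  shows "bij_betw (\<lambda>P. P - {{s}}) {P. partition_on A P \<and> {s} \<in> P} {P. partition_on (A - {s}) P}"
proof (rule bij_betw_byWitness[where f' = "insert {s}"])
  show "(\<lambda>P. P - {{s}}) ` {P. partition_on A P \<and> {s} \<in> P} \<subseteq> {P. partition_on (A - {s}) P}"
    by (auto intro: partition_on_Diff_singleton_block)
  have "partition_on A (insert {s} Q)" if "partition_on (A - {s}) Q" for Q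
    using that assms partition_on_insert[of "{s}" Q A] by (auto simp: disjnt_def dest: partition_onD1)
  then show "insert {s} ` {P. partition_on (A - {s}) P} \<subseteq> {P. partition_on A P \<and> {s} \<in> P}"
    by auto
qed (auto dest: partition_on_block_subset)

lemma bij_betw_partition_image:
  assumes h: "bij_betw h A B"
  shows "bij_betw ((`) ((`) h)) {P. partition_on A P} {P. partition_on B P}"
proof -
  define g where "g = the_inv_into A h"
  have g: "bij_betw g B A"
    unfolding g_def by (rule bij_betw_the_inv_into[OF h])
  have gh: "g (h x) = x" if "x \<in> X" "X \<in> P" "partition_on A P" for x X P
    using that h partition_on_block_subset by (fastforce simp: g_def bij_betw_def the_inv_into_f_f)
  have hg: "h (g y) = y" if "y \<in> Y" "Y \<in> Q" "partition_on B Q" for y Y Q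
    using that h partition_on_block_subset by (fastforce simp: g_def bij_betw_def f_the_inv_into_f)
  show ?thesis
  proof (rule bij_betw_byWitness[where f' = "(`) ((`) g)"])
    show "\<forall>P\<in>{P. partition_on A P}. (`) g ` (`) h ` P = P"
      by (simp add: image_image gh cong: image_cong)
    show "\<forall>Q\<in>{P. partition_on B P}. (`) h ` (`) g ` Q = Q"
      by (simp add: image_image hg cong: image_cong)
  qed (auto intro: partition_on_bij_betw_image h g)
qed

definition proper_partitions :: "nat \<Rightarrow> nat set set set" where
  "proper_partitions n = {P. partition_on {0..<n} P \<and> P \<noteq> {{0..<n}}}"

lemma finite_proper_partitions: "finite (proper_partitions n)"
  by (rule finite_subset[OF _ finitely_many_partition_on[of "{0..<n}"]])
    (auto simp: proper_partitions_def)

lemma partitions_eq_insert_proper: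
  "0 < n \<Longrightarrow> {P. partition_on {0..<n} P} = insert {{0..<n}} (proper_partitions n)"
  using partition_on_space[of "{0..<n}"] by (auto simp: proper_partitions_def)

lemma card_block_less_if_proper:
  assumes "P \<in> proper_partitions n" "B \<in> P"
  shows "card B < n"
proof -
  have P: "partition_on {0..<n} P" "P \<noteq> {{0..<n}}"
    using assms(1) by (auto simp: proper_partitions_def)
  then have "B \<subset> {0..<n}"
    using partition_on_block_subset partition_on_eq_singleton_if_mem assms(2) by blast
  then show ?thesis using psubset_card_mono[of "{0..<n}" B] by simp
qed

lemma length_nths_block_less:
  assumes "P \<in> proper_partitions (length xs)" "B \<in> P"
  shows "length (nths xs B) < length xs"
proof -
  have "B \<subseteq> {0..<length xs}"
    using assms partition_on_block_subset by (auto simp: proper_partitions_def)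
  from length_nths_subset[OF this] show ?thesis using card_block_less_if_proper[OF assms] by simp
qed

lemma proper_partitions_Suc_0: "proper_partitions (Suc 0) = {}"
proof -
  have False if P: "P \<in> proper_partitions (Suc 0)" for P
  proof -
    obtain B where B: "B \<in> P" "0 \<in> B"
      using P partition_on_block_exists[of "{0..<Suc 0}" P 0] by (auto simp: proper_partitions_def)
    moreover have "B \<subseteq> {0..<Suc 0}"
      using P B(1) partition_on_block_subset by (auto simp: proper_partitions_def)
    then have "finite B" by (rule finite_subset) simp
    ultimately show False using card_block_less_if_proper[OF P B(1)] by auto
  qed
  then show ?thesis by blast
qed

lemma non_singleton_block_if_proper:
  assumes P: "P \<in> proper_partitions n" and "s < n" "{s} \<notin> P"
  obtains B where "B \<in> P" "s \<in> B" "2 \<le> card B" "B \<subseteq> {0..<n}"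
proof -
  have part: "partition_on {0..<n} P" using P by (simp add: proper_partitions_def)
  obtain B where B: "B \<in> P" "s \<in> B" using partition_on_block_exists[OF part] \<open>s < n\<close> by auto
  have sub: "B \<subseteq> {0..<n}" using partition_on_block_subset[OF part B(1)] .
  have "B \<noteq> {s}" using B(1) \<open>{s} \<notin> P\<close> by auto
  then obtain t where "t \<in> B" "t \<noteq> s" using B(2) by blast
  then have "card {s, t} \<le> card B"
    using B(2) sub by (intro card_mono) (auto intro: finite_subset)
  with \<open>t \<noteq> s\<close> have "2 \<le> card B" by simp
  with B sub show ?thesis using that by blast
qed

lemma prod_blocks_linear_at:
  fixes f :: "'a list \<Rightarrow> 'b::comm_semiring_1"
  assumes P: "partition_on {0..<Suc (length u + length v)} P"
    and lin: "\<And>B. B \<in> P \<Longrightarrow> length u \<in> B \<Longrightarrow>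
      f (nths (u @ z # v) B) = c * f (nths (u @ x # v) B) + f (nths (u @ y # v) B)"
  shows "(\<Prod>B\<in>P. f (nths (u @ z # v) B)) =
    c * (\<Prod>B\<in>P. f (nths (u @ x # v) B)) + (\<Prod>B\<in>P. f (nths (u @ y # v) B))"
proof -
  obtain B0 where B0: "B0 \<in> P" "length u \<in> B0"
    using partition_on_block_exists[OF P, of "length u"] by auto
  have "length u \<notin> B" if "B \<in> P - {B0}" for B
    using partition_on_block_unique[OF P, of B B0 "length u"] that B0 by auto
  then have rest: "(\<Prod>B\<in>P - {B0}. f (nths (u @ t # v) B)) = (\<Prod>B\<in>P - {B0}. f (nths (u @ x # v) B))"
    for t by (intro prod.cong refl arg_cong[where f = f] nths_mid_not_mem)
  have "finite P" using finite_elements[OF _ P] by simp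
  then have "(\<Prod>B\<in>P. f (nths (u @ t # v) B)) =
      f (nths (u @ t # v) B0) * (\<Prod>B\<in>P - {B0}. f (nths (u @ x # v) B))" for t
    using prod.remove[OF _ B0(1)] rest by metis
  then show ?thesis using lin[OF B0] by (simp add: ring_distribs mult_ac)
qed

section \<open>The alpha-logarithm as a recursion\<close>

lemma exp_alpha_eq_plus_proper:
  assumes "monic_weights \<alpha>" "admissible S w"
  shows "exp_alpha S \<alpha> \<chi> w =
    \<chi> w + (\<Sum>P\<in>proper_partitions (length w). \<alpha> (map fst w) P * (\<Prod>B\<in>P. \<chi> (nths w B)))"
proof -
  have "w \<noteq> []" using assms(2) by (simp add: admissible_def)
  then have "\<alpha> (map fst w) {{0..<length w}} = 1"
    using assms(1) unfolding monic_weights_def by (metis length_map map_is_Nil_conv)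
  moreover have "{{0..<length w}} \<notin> proper_partitions (length w)"
    by (simp add: proper_partitions_def)
  ultimately show ?thesis
    using assms(2) \<open>w \<noteq> []\<close>
    by (simp add: exp_alpha_def partitions_eq_insert_proper finite_proper_partitions nths_all)
qed

lemma exp_alpha_singleton_word:
  "monic_weights \<alpha> \<Longrightarrow> admissible S [p] \<Longrightarrow> exp_alpha S \<alpha> \<chi> [p] = \<chi> [p]"
  using exp_alpha_eq_plus_proper[of \<alpha> S "[p]" \<chi>] by (simp add: proper_partitions_Suc_0)

function log_rec :: "('f \<Rightarrow> 'a set) \<Rightarrow> ('f list \<Rightarrow> nat set set \<Rightarrow> complex)
    \<Rightarrow> (('f \<times> 'a) list \<Rightarrow> complex) \<Rightarrow> ('f \<times> 'a) list \<Rightarrow> complex" where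
  "log_rec S \<alpha> \<psi> w = (if admissible S w then \<psi> w -
     (\<Sum>P\<in>proper_partitions (length w). \<alpha> (map fst w) P * (\<Prod>B\<in>P. log_rec S \<alpha> \<psi> (nths w B)))
   else 0)"
  by auto
termination
  by (relation "measure (\<lambda>(S, \<alpha>, \<psi>, w). length w)") (auto intro: length_nths_block_less)
declare log_rec.simps [simp del]

lemma exp_alpha_log_rec:
  assumes "monic_weights \<alpha>" "\<And>w. \<not> admissible S w \<Longrightarrow> \<psi> w = 0"
  shows "exp_alpha S \<alpha> (log_rec S \<alpha> \<psi>) = \<psi>"
proof
  fix w
  show "exp_alpha S \<alpha> (log_rec S \<alpha> \<psi>) w = \<psi> w"
  proof (cases "admissible S w")
    case True
    then show ?thesis
      by (simp add: exp_alpha_eq_plus_proper[OF assms(1)] log_rec.simps[of S \<alpha> \<psi> w])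
  qed (simp add: assms(2) exp_alpha_def)
qed

lemma eq_log_rec_if_exp_alpha_eq:
  assumes "monic_weights \<alpha>" "\<And>w. \<not> admissible S w \<Longrightarrow> \<chi> w = 0" "exp_alpha S \<alpha> \<chi> = \<psi>"
  shows "\<chi> w = log_rec S \<alpha> \<psi> w"
proof (induction "length w" arbitrary: w rule: less_induct)
  case less
  show ?case
  proof (cases "admissible S w")
    case True
    have "\<psi> w = \<chi> w + (\<Sum>P\<in>proper_partitions (length w). \<alpha> (map fst w) P * (\<Prod>B\<in>P. \<chi> (nths w B)))"
      using exp_alpha_eq_plus_proper[OF assms(1) True, of \<chi>] assms(3) by simp
    also have "(\<Sum>P\<in>proper_partitions (length w). \<alpha> (map fst w) P * (\<Prod>B\<in>P. \<chi> (nths w B))) =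
        (\<Sum>P\<in>proper_partitions (length w). \<alpha> (map fst w) P * (\<Prod>B\<in>P. log_rec S \<alpha> \<psi> (nths w B)))"
      by (intro sum.cong refl arg_cong2[where f = "(*)"] prod.cong less length_nths_block_less)
    finally show ?thesis
      using True by (simp add: log_rec.simps[of S \<alpha> \<psi> w])
  next
    case False
    then show ?thesis by (subst log_rec.simps) (simp add: assms(2))
  qed
qed

lemma log_rec_linear_at:
  assumes T0: "T0_functional sm S \<psi>" and sub: "subalgebra sm (S q)"
    and ab: "a \<in> S q" "b \<in> S q"
  shows "log_rec S \<alpha> \<psi> (u @ (q, sm c a + b) # v) =
    c * log_rec S \<alpha> \<psi> (u @ (q, a) # v) + log_rec S \<alpha> \<psi> (u @ (q, b) # v)"
proof (induction "length u + length v" arbitrary: u v rule: less_induct)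
  case less
  define W where "W x = u @ (q, x) # v" for x
  define z where "z = sm c a + b"
  have "z \<in> S q" using sub ab by (simp add: z_def subalgebra_def)
  then have adm: "admissible S (W z) = admissible S (W a)" "admissible S (W b) = admissible S (W a)"
    using admissible_mid_cong ab unfolding W_def by metis+
  define R where "R x = (\<Sum>P\<in>proper_partitions (Suc (length u + length v)).
      \<alpha> (map fst (W a)) P * (\<Prod>B\<in>P. log_rec S \<alpha> \<psi> (nths (W x) B)))" for x
  have log_rec_W: "log_rec S \<alpha> \<psi> (W x) = (if admissible S (W x) then \<psi> (W x) - R x else 0)" for x
    unfolding R_def by (subst log_rec.simps) (simp add: W_def)
  have "R z = c * R a + R b"
  proof -
    have "(\<Prod>B\<in>P. log_rec S \<alpha> \<psi> (nths (W z) B)) =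
        c * (\<Prod>B\<in>P. log_rec S \<alpha> \<psi> (nths (W a) B)) + (\<Prod>B\<in>P. log_rec S \<alpha> \<psi> (nths (W b) B))"
      if P: "P \<in> proper_partitions (Suc (length u + length v))" for P
      unfolding W_def
    proof (rule prod_blocks_linear_at)
      show "partition_on {0..<Suc (length u + length v)} P" using P by (simp add: proper_partitions_def)
      fix B assume B: "B \<in> P" "length u \<in> B"
      define u' where "u' = nths u B"
      define v' where "v' = nths v {j. Suc (j + length u) \<in> B}"
      have "length (nths (W a) B) < length (W a)"
        using length_nths_block_less[of P "W a" B] P B by (simp add: W_def)
      then have "length u' + length v' < length u + length v"
        by (simp add: W_def u'_def v'_def nths_mid_mem[OF B(2)])
      from less[OF this] show "log_rec S \<alpha> \<psi> (nths (u @ (q, z) # v) B) =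
          c * log_rec S \<alpha> \<psi> (nths (u @ (q, a) # v) B) + log_rec S \<alpha> \<psi> (nths (u @ (q, b) # v) B)"
        by (simp add: nths_mid_mem[OF B(2)] u'_def v'_def z_def)
    qed
    then show ?thesis
      unfolding R_def by (simp add: algebra_simps sum_distrib_left sum.distrib[symmetric] cong: sum.cong)
  qed
  moreover have "\<psi> (W z) = c * \<psi> (W a) + \<psi> (W b)"
    using T0 ab unfolding T0_functional_def W_def z_def by blast
  ultimately have "log_rec S \<alpha> \<psi> (W z) = c * log_rec S \<alpha> \<psi> (W a) + log_rec S \<alpha> \<psi> (W b)"
    unfolding log_rec_W adm by (simp add: algebra_simps)
  then show ?case by (simp add: W_def z_def)
qed

lemma T0_functional_log_rec:
  assumes "T0_functional sm S \<psi>" "\<And>q. subalgebra sm (S q)"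
  shows "T0_functional sm S (log_rec S \<alpha> \<psi>)"
  unfolding T0_functional_def
  using log_rec_linear_at[OF assms(1) assms(2)] by (auto simp: log_rec.simps)

lemma log_alpha_eq_log_rec:
  assumes T0: "T0_functional sm S \<psi>" and "\<And>q. subalgebra sm (S q)" "monic_weights \<alpha>"
  shows "log_alpha sm S \<alpha> \<psi> = log_rec S \<alpha> \<psi>"
  unfolding log_alpha_def
proof (rule the_equality)
  have "\<And>w. \<not> admissible S w \<Longrightarrow> \<psi> w = 0" using T0 by (simp add: T0_functional_def)
  then show "T0_functional sm S (log_rec S \<alpha> \<psi>) \<and> exp_alpha S \<alpha> (log_rec S \<alpha> \<psi>) = \<psi>"
    using T0_functional_log_rec[OF assms(1,2)] exp_alpha_log_rec[OF assms(3)] by blast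
next
  fix \<chi> assume \<chi>: "T0_functional sm S \<chi> \<and> exp_alpha S \<alpha> \<chi> = \<psi>"
  show "\<chi> = log_rec S \<alpha> \<psi>"
  proof
    fix w
    show "\<chi> w = log_rec S \<alpha> \<psi> w"
      using \<chi> eq_log_rec_if_exp_alpha_eq[OF assms(3), of S \<chi> \<psi> w] by (simp add: T0_functional_def)
  qed
qed

section \<open>Cumulants of words containing a unit\<close>

lemma sum_partitions_with_singleton_block:
  assumes si: "singleton_inductive \<alpha>" and s: "s < length w" and n: "1 < length w"
  defines "w' \<equiv> nths w ({0..<length w} - {s})"
  shows "(\<Sum>P | partition_on {0..<length w} P \<and> {s} \<in> P. \<alpha> (map fst w) P * (\<Prod>B\<in>P. \<chi> (nths w B)))
    = \<chi> [w ! s] * (\<Sum>P | partition_on {0..<length w'} P. \<alpha> (map fst w') P * (\<Prod>B\<in>P. \<chi> (nths w' B)))"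
proof -
  define T where "T = {0..<length w} - {s}"
  define g where "g P = (`) ((`) (std_idx T)) (P - {{s}})" for P
  have "finite T" by (simp add: T_def)
  have "length w' = card T" using s by (simp add: w'_def T_def length_nths_subset)
  then have idx: "bij_betw (std_idx T) T {0..<length w'}" using bij_betw_std_idx[OF \<open>finite T\<close>] by simp
  have remove: "bij_betw (\<lambda>P. P - {{s}}) {P. partition_on {0..<length w} P \<and> {s} \<in> P} {P. partition_on T P}"
    unfolding T_def using s by (intro bij_betw_remove_singleton_block) simp
  have g: "bij_betw g {P. partition_on {0..<length w} P \<and> {s} \<in> P} {P. partition_on {0..<length w'} P}"
    using bij_betw_trans[OF remove bij_betw_partition_image[OF idx]] unfolding g_def[abs_def] comp_def .
  have term_eq: "\<alpha> (map fst w) P * (\<Prod>B\<in>P. \<chi> (nths w B)) =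
      \<chi> [w ! s] * (\<alpha> (map fst w') (g P) * (\<Prod>B\<in>g P. \<chi> (nths w' B)))"
    if P: "partition_on {0..<length w} P" "{s} \<in> P" for P
  proof -
    have blocks: "B \<subseteq> T" if "B \<in> P - {{s}}" for B
      using partition_on_block_subset[OF partition_on_Diff_singleton_block[OF P] that] by (simp add: T_def)
    have "finite P" using finite_elements[OF _ P(1)] by simp
    have "\<alpha> (map fst w) P = \<alpha> (map fst w') (g P)"
      using si P n unfolding singleton_inductive_def by (simp add: g_def T_def w'_def nths_map)
    moreover have "(\<Prod>B\<in>P. \<chi> (nths w B)) = \<chi> (nths w {s}) * (\<Prod>B\<in>P - {{s}}. \<chi> (nths w B))"
      by (rule prod.remove[OF \<open>finite P\<close> P(2)])
    moreover have "(\<Prod>B\<in>P - {{s}}. \<chi> (nths w B)) = (\<Prod>B\<in>P - {{s}}. \<chi> (nths w' (std_idx T ` B)))"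
      using blocks by (simp add: w'_def T_def[symmetric] nths_nths_std_idx[OF \<open>finite T\<close>])
    moreover have "inj_on ((`) (std_idx T)) (P - {{s}})"
      using inj_on_subset[OF inj_on_image_Pow[OF inj_on_std_idx[OF \<open>finite T\<close>]]] blocks by blast
    then have "(\<Prod>B\<in>P - {{s}}. \<chi> (nths w' (std_idx T ` B))) = (\<Prod>B\<in>g P. \<chi> (nths w' B))"
      by (simp add: g_def prod.reindex)
    ultimately show ?thesis using nths_singleton_index[OF s] by simp
  qed
  have "(\<Sum>P | partition_on {0..<length w} P \<and> {s} \<in> P. \<alpha> (map fst w) P * (\<Prod>B\<in>P. \<chi> (nths w B)))
      = \<chi> [w ! s] * (\<Sum>P | partition_on {0..<length w} P \<and> {s} \<in> P.
          \<alpha> (map fst w') (g P) * (\<Prod>B\<in>g P. \<chi> (nths w' B)))"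
    by (simp add: term_eq sum_distrib_left)
  also have "\<dots> = \<chi> [w ! s] * (\<Sum>P | partition_on {0..<length w'} P. \<alpha> (map fst w') P * (\<Prod>B\<in>P. \<chi> (nths w' B)))"
    using sum.reindex_bij_betw[OF g, of "\<lambda>P. \<alpha> (map fst w') P * (\<Prod>B\<in>P. \<chi> (nths w' B))"] by simp
  finally show ?thesis .
qed

lemma exp_alpha_split_at_position:
  assumes monic: "monic_weights \<alpha>" and si: "singleton_inductive \<alpha>"
    and adm: "admissible S w" and s: "s < length w" and n: "1 < length w"
  shows "exp_alpha S \<alpha> \<chi> w = \<chi> w + \<chi> [w ! s] * exp_alpha S \<alpha> \<chi> (nths w ({0..<length w} - {s}))
    + (\<Sum>P | P \<in> proper_partitions (length w) \<and> {s} \<notin> P. \<alpha> (map fst w) P * (\<Prod>B\<in>P. \<chi> (nths w B)))"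
proof -
  define w' where "w' = nths w ({0..<length w} - {s})"
  define F where "F P = \<alpha> (map fst w) P * (\<Prod>B\<in>P. \<chi> (nths w B))" for P
  define P1 where "P1 = {P. partition_on {0..<length w} P \<and> {s} \<in> P}"
  define P2 where "P2 = {P. P \<in> proper_partitions (length w) \<and> {s} \<notin> P}"
  have "{s} \<noteq> {0..<length w}"
  proof
    assume "{s} = {0..<length w}"
    then have "0 \<in> {s}" "1 \<in> {s}" using n by auto
    then show False by simp
  qed
  then have split: "proper_partitions (length w) = P1 \<union> P2" "P1 \<inter> P2 = {}"
    by (auto simp: P1_def P2_def proper_partitions_def)
  have "finite P1" "finite P2" using finite_proper_partitions[of "length w"] split by auto
  have "length w' = length w - 1" using s by (simp add: w'_def length_nths_subset)
  then have "w' \<noteq> []" using n by auto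
  then have "admissible S w'" using admissible_nths[OF adm] by (simp add: w'_def)
  then have "sum F P1 = \<chi> [w ! s] * exp_alpha S \<alpha> \<chi> w'"
    using sum_partitions_with_singleton_block[OF si s n]
    by (simp add: F_def P1_def w'_def exp_alpha_def)
  moreover have "exp_alpha S \<alpha> \<chi> w = \<chi> w + sum F P1 + sum F P2"
    using exp_alpha_eq_plus_proper[OF monic adm, of \<chi>] split \<open>finite P1\<close> \<open>finite P2\<close>
    by (simp add: F_def sum.union_disjoint)
  ultimately show ?thesis by (simp add: F_def P2_def w'_def)
qed

lemma vanishes_on_words_with_unit:
  fixes \<chi> \<psi> :: "('f \<times> 'a) list \<Rightarrow> complex" and one :: "'f \<Rightarrow> 'a"
  assumes exp: "exp_alpha S \<alpha> \<chi> = \<psi>" and monic: "monic_weights \<alpha>" and si: "singleton_inductive \<alpha>"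
    and unit_letter: "\<And>q. admissible S [(q, one q)] \<Longrightarrow> \<psi> [(q, one q)] = 1"
    and remove_unit: "\<And>u q v. admissible S (u @ (q, one q) # v) \<Longrightarrow> u @ v \<noteq> [] \<Longrightarrow>
      \<psi> (u @ (q, one q) # v) = \<psi> (u @ v)"
  shows "admissible S w \<Longrightarrow> 1 < length w \<Longrightarrow> (q, one q) \<in> set w \<Longrightarrow> \<chi> w = 0"
proof (induction "length w" arbitrary: w q rule: less_induct)
  case less
  obtain u v where w: "w = u @ (q, one q) # v" using split_list[OF less.prems(3)] by blast
  define s where "s = length u"
  have s: "s < length w" "w ! s = (q, one q)" by (simp_all add: s_def w)
  have "admissible S [(q, one q)]" using less.prems(1,3) by (auto simp: admissible_def)
  then have unit: "\<chi> [(q, one q)] = 1"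
    using unit_letter exp exp_alpha_singleton_word[OF monic] by metis
  have "nths w ({0..<length w} - {s}) = u @ v"
    unfolding w s_def by (rule nths_remove_mid)
  moreover have "u @ v \<noteq> []" using less.prems(2) by (auto simp: w)
  ultimately have removed: "\<psi> (nths w ({0..<length w} - {s})) = \<psi> w"
    using remove_unit less.prems(1) by (simp add: w)
  have rest: "(\<Sum>P | P \<in> proper_partitions (length w) \<and> {s} \<notin> P.
      \<alpha> (map fst w) P * (\<Prod>B\<in>P. \<chi> (nths w B))) = 0"
  proof (intro sum.neutral ballI)
    fix P assume "P \<in> {P. P \<in> proper_partitions (length w) \<and> {s} \<notin> P}"
    then have P: "P \<in> proper_partitions (length w)" "{s} \<notin> P" by simp_all
    then obtain B where B: "B \<in> P" "s \<in> B" "2 \<le> card B" "B \<subseteq> {0..<length w}"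
      using non_singleton_block_if_proper s(1) by blast
    have "\<chi> (nths w B) = 0"
    proof (rule less.hyps)
      have len: "length (nths w B) = card B" using B(4) by (simp add: length_nths_subset)
      show "length (nths w B) < length w" using length_nths_block_less P(1) B(1) .
      show "admissible S (nths w B)" using len B(3) by (intro admissible_nths[OF less.prems(1)]) auto
      show "1 < length (nths w B)" using len B(3) by simp
      show "(q, one q) \<in> set (nths w B)" using B(2) s by (auto simp: set_nths intro!: exI[of _ s])
    qed
    moreover have "finite P"
      using P(1) finite_elements[of "{0..<length w}" P] by (simp add: proper_partitions_def)
    ultimately show "\<alpha> (map fst w) P * (\<Prod>B\<in>P. \<chi> (nths w B)) = 0"
      using B(1) by (auto simp: prod_zero_iff)
  qed
  show ?case
    using exp_alpha_split_at_position[OF monic si less.prems(1) s(1) less.prems(2), of \<chi>]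
      exp s(2) unit removed rest
    by simp
qed

section \<open>The functional phi_hat\<close>

lemma linear_functional_diff: "linear_functional sm \<phi> \<Longrightarrow> \<phi> (x - y) = \<phi> x - \<phi> y"
  unfolding linear_functional_def by (metis add_diff_cancel diff_add_cancel)

lemma T0_functional_phi_hat:
  assumes ca: "complex_algebra sm" and lf: "linear_functional sm \<phi>"
    and sub: "\<And>q. subalgebra sm (S q)"
  shows "T0_functional sm S (phi_hat S \<phi>)"
  unfolding T0_functional_def
proof (intro conjI allI impI)
  fix w assume "\<not> admissible S w"
  then show "phi_hat S \<phi> w = 0" by (simp add: phi_hat_def)
next
  fix u v q a b c assume ab: "a \<in> S q" "b \<in> S q"
  then have "sm c a + b \<in> S q" using sub[of q] by (simp add: subalgebra_def)
  then have adm: "admissible S (u @ (q, sm c a + b) # v) = admissible S (u @ (q, a) # v)"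
      "admissible S (u @ (q, b) # v) = admissible S (u @ (q, a) # v)"
    using admissible_mid_cong ab by metis+
  show "phi_hat S \<phi> (u @ (q, sm c a + b) # v) =
      c * phi_hat S \<phi> (u @ (q, a) # v) + phi_hat S \<phi> (u @ (q, b) # v)"
    using lf unfolding phi_hat_def adm
    by (simp add: lprod_mid_add lprod_mid_scale[OF ca] linear_functional_def)
qed

lemma phi_hat_remove_unit:
  assumes lf: "linear_functional sm \<phi>"
    and one: "\<And>Q. one Q \<in> S Q \<and> (\<forall>a\<in>S Q. one Q * a = a \<and> a * one Q = a)"
    and vanish: "\<And>x. x \<in> ideal_generated sm {one q - one Q | q Q. True} \<Longrightarrow> \<phi> x = 0"
    and adm: "admissible S (u @ (q, one q) # v)" and ne: "u @ v \<noteq> []"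
  shows "phi_hat S \<phi> (u @ (q, one q) # v) = phi_hat S \<phi> (u @ v)"
proof -
  define xs where "xs = map snd u"
  define ys where "ys = map snd v"
  have letter: "snd p \<in> S (fst p)" if "p \<in> set u \<or> p \<in> set v" for p
    using adm that by (auto simp: admissible_def)
  obtain Q where Q: "lprod (xs @ one Q # ys) = lprod (xs @ ys)"
  proof (cases "v = []")
    case False
    then have "one (fst (hd v)) * hd ys = hd ys"
      using one letter[of "hd v"] by (simp add: ys_def hd_map)
    moreover have "ys \<noteq> []" using False by (simp add: ys_def)
    ultimately show ?thesis by (intro that[of "fst (hd v)"] lprod_mid_left_unit)
  next
    case True
    then have "u \<noteq> []" using ne by simp
    then have "last xs * one (fst (last u)) = last xs"
      using one letter[of "last u"] by (simp add: xs_def last_map)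
    then have "lprod xs * one (fst (last u)) = lprod xs"
      using \<open>u \<noteq> []\<close> by (intro lprod_right_unit) (simp_all add: xs_def)
    moreover have "xs \<noteq> []" using \<open>u \<noteq> []\<close> by (simp add: xs_def)
    ultimately show ?thesis
      using True by (intro that[of "fst (last u)"]) (simp add: ys_def lprod_append)
  qed
  have "lprod (xs @ one q # ys) - lprod (xs @ ys) = lprod (xs @ (one q - one Q) # ys)"
    by (simp add: lprod_mid_diff Q)
  also have "\<dots> \<in> ideal_generated sm {one q - one Q | q Q. True}"
    by (rule lprod_mid_mem_ideal_generated) blast
  finally have "\<phi> (lprod (xs @ one q # ys) - lprod (xs @ ys)) = 0"
    by (rule vanish)
  then have "\<phi> (lprod (xs @ one q # ys)) = \<phi> (lprod (xs @ ys))"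
    by (simp add: linear_functional_diff[OF lf])
  moreover have "admissible S (u @ v)" using adm ne by (auto simp: admissible_def)
  ultimately show ?thesis using adm by (simp add: phi_hat_def xs_def ys_def)
qed

theorem lemma9p6:
  fixes sm :: "complex \<Rightarrow> 'a::ring \<Rightarrow> 'a"
    and S :: "'f::finite \<Rightarrow> 'a set"
    and one :: "'f \<Rightarrow> 'a"
    and \<phi> :: "'a \<Rightarrow> complex"
    and \<alpha> :: "'f list \<Rightarrow> nat set set \<Rightarrow> complex"
  assumes "monic_weights \<alpha>"
    and "singleton_inductive \<alpha>"
    and "multi_faced sm S"
    and "\<And>Q. one Q \<in> S Q \<and> (\<forall>a\<in>S Q. one Q * a = a \<and> a * one Q = a)"
    and "linear_functional sm \<phi>"
    and "\<And>Q. \<phi> (one Q) = 1"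
    and "\<And>x. x \<in> ideal_generated sm {one q - one Q | q Q. True} \<Longrightarrow> \<phi> x = 0"
    and "length w > 1"
    and "\<forall>l<length w. snd (w ! l) \<in> S (fst (w ! l))"
    and "s < length w"
    and "snd (w ! s) = one (fst (w ! s))"
  shows "log_alpha sm S \<alpha> (phi_hat S \<phi>) w = 0"
proof -
  have ca: "complex_algebra sm" and sub: "\<And>Q. subalgebra sm (S Q)"
    using assms(3) by (simp_all add: multi_faced_def)
  have T0: "T0_functional sm S (phi_hat S \<phi>)"
    by (rule T0_functional_phi_hat[OF ca assms(5) sub])
  have "exp_alpha S \<alpha> (log_rec S \<alpha> (phi_hat S \<phi>)) = phi_hat S \<phi>"
    by (rule exp_alpha_log_rec[OF assms(1)]) (simp add: phi_hat_def)
  moreover have "phi_hat S \<phi> [(q, one q)] = 1" if "admissible S [(q, one q)]" for q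
    using that assms(6) by (simp add: phi_hat_def)
  moreover have "phi_hat S \<phi> (u @ (q, one q) # v) = phi_hat S \<phi> (u @ v)"
    if "admissible S (u @ (q, one q) # v)" "u @ v \<noteq> []" for u q v
    using phi_hat_remove_unit[OF assms(5) assms(4) assms(7) that] .
  moreover have "admissible S w"
    using assms(8,9) unfolding admissible_def by (metis in_set_conv_nth list.size(3) not_less_zero)
  moreover have "(fst (w ! s), one (fst (w ! s))) \<in> set w"
    using assms(10,11) by (metis nth_mem prod.collapse)
  ultimately have "log_rec S \<alpha> (phi_hat S \<phi>) w = 0"
    using vanishes_on_words_with_unit[OF _ assms(1,2)] assms(8) by blast
  then show ?thesis using log_alpha_eq_log_rec[OF T0 sub assms(1)] by simp
qed

end
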